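(* Let $(\ell_n)_{n\in\mathbb N}$ and $(\sigma_{n,0})_{n\in\mathbb N}$ be sequences of strictly positive reals, $(\kappa_n)_{n\in\mathbb N}$ a sequence of reals, and $(\sigma_{n,1})_{n\in\mathbb N}$, $(\sigma_{n,-1})_{n\in\mathbb N}$ sequences of nonnegative reals. Put $\sigma_n=\max(\sigma_{n,-1},\sigma_{n,1})$. Assume $$\liminf_{n\to\infty}\frac{1}{n^2}\Big(\frac{\ell_n}{\sigma_{n,0}}+\frac{(\kappa_n^-)^2}{\sigma_{n,0}^2}\Big)=0 .$$ Assume $\mathbb N$ is a disjoint union $\mathbb N=\mathbb N_a\cup\mathbb N_b$ such that (a) $2\sigma_n\le\sigma_{n,0}$ for every $n\in\mathbb N_a$, and (b) $\sigma_n\le\sigma_{n,0}<2\sigma_n$ and $-2(\sigma_{n,0}-\sigma_n)\sqrt{\ell_n}\le \kappa_n\sqrt{2\sigma_n-\sigma_{n,0}}$ for every $n\in\mathbb N_b$. Let $x_0\in\mathbb R$; if $1\in\mathbb N_a$, $x_0$ is arbitrary, while if $1\in\mathbb N_b$ assume additionally $$-2(\sigma_{1,0}-\sigma_1)\sqrt{\ell_1}\le(\sigma_{1,-1}x_0+\kappa_1)\sqrt{2\sigma_1-\sigma_{1,0}} .$$ Then there is at most one positive sequence $(x_n)_{n\in\mathbb N}$ satisfying $$\ell_n = x_n\big(\sigma_{n,1}x_{n+1}+\sigma_{n,0}x_n+\sigma_{n,-1}x_{n-1}\big)+\kappa_n x_n,\qquad n\in\mathbb N,$$ with the given $x_0$;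 equivalently, there is a number $x^\ast>0$ such that every positive solution has $x_1=x^\ast$, and any two positive solutions coincide.
   Context: $\mathbb N=\{1,2,3,\dots\}$. For $a\in\mathbb R$, $a^-=(|a|-a)/2$ denotes the negative part. A solution with given $x_0\in\mathbb R$ is a real sequence $(x_n)_{n\in\mathbb N}$ satisfying the displayed equation for all $n\in\mathbb N$ (where the $n=1$ equation involves the given $x_0$); it is positive if $x_n>0$ for all $n\in\mathbb N$. *)

theory Defs
  imports "HOL-Analysis.Analysis"
begin

definition neg_part :: "real \<Rightarrow> real" where
  "neg_part a = (\<bar>a\<bar> - a) / 2"

definition positive_solution ::
  "(nat \<Rightarrow> real) \<Rightarrow> (nat \<Rightarrow> real) \<Rightarrow> (nat \<Rightarrow> real) \<Rightarrow> (nat \<Rightarrow> real) \<Rightarrow> (nat \<Rightarrow> real)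
   \<Rightarrow> real \<Rightarrow> (nat \<Rightarrow> real) \<Rightarrow> bool" where
  "positive_solution l s0 sp sm \<kappa> x0 x \<longleftrightarrow>
     x 0 = x0 \<and> (\<forall>n\<ge>1. x n > 0) \<and>
     (\<forall>n\<ge>1. l n = x n * (sp n * x (Suc n) + s0 n * x n + sm n * x (n - 1)) + \<kappa> n * x n)"

end

theory Submission
  imports Defs
begin

text \<open>Suppose two positive solutions x, y first differ at index m. Dividing the equation by x_n,
  resp. y_n, and subtracting shows that d = x - y satisfies
  \<sigma>_{n,1} d_{n+1} + A_n d_n + \<sigma>_{n,-1} d_{n-1} = 0 with A_n = \<sigma>_{n,0} + \<ell>_n / (x_n y_n).
  The hypotheses on N_a and N_b give x_n^2 (2 \<sigma>_n - \<sigma>_{n,0}) \<le> \<ell>_n for every positive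
  solution, hence A_n \<ge> 2 \<sigma>_n. A recurrence with such a dominant middle coefficient forces d to
  alternate in sign with |d_n| growing at least linearly, so d_n^2 \<ge> c n^2 for large n. On the
  other hand, dropping the nonnegative neighbour terms of the equation bounds every positive
  solution by x_n^2 \<le> 2 (\<ell>_n / \<sigma>_{n,0} + (\<kappa>_n^-)^2 / \<sigma>_{n,0}^2), contradicting the liminf
  hypothesis.\<close>

lemma quadratic_le_imp_sq_mul_le:
  fixes c s L k x :: real
  assumes c: "c > 0" and cs: "c < 2 * s" and L: "L > 0" and x: "x > 0"
    and quad: "x * (c * x + k) \<le> L"
    and k: "- 2 * (c - s) * sqrt L \<le> k * sqrt (2 * s - c)"
  shows "x\<^sup>2 * (2 * s - c) \<le> L"
proof (rule ccontr)
  define D where "D = 2 * s - c"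
  have D: "D > 0" and sD: "sqrt D > 0" and sL: "sqrt L > 0"
    using cs L by (simp_all add: D_def)
  define t where "t = sqrt L / sqrt D"
  have t: "t > 0" and t2: "t\<^sup>2 = L / D"
    using sD sL D L by (simp_all add: t_def power_divide)
  \<comment> \<open>the hypothesis on \<open>k\<close> says precisely that \<open>t (c t + k) \<ge> L\<close>\<close>
  have "k * sqrt D \<ge> (D - c) * sqrt L"
    using k by (simp add: D_def algebra_simps)
  have "k * t = k * sqrt D * sqrt L / D"
    using sD D by (simp add: t_def field_simps)
  also have "\<dots> \<ge> (D - c) * sqrt L * sqrt L / D"
    using \<open>k * sqrt D \<ge> (D - c) * sqrt L\<close> sL D by (simp add: divide_right_mono mult_right_mono)
  also have "(D - c) * sqrt L * sqrt L / D = (D - c) * L / D"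
    using L by simp
  finally have kt: "k * t \<ge> (D - c) * L / D" .
  have "t * (c * t + k) = c * (L / D) + k * t"
    using t2 by (simp add: algebra_simps power2_eq_square)
  also have "\<dots> \<ge> c * (L / D) + (D - c) * L / D"
    using kt by simp
  also have "c * (L / D) + (D - c) * L / D = L"
    using D by (simp add: field_simps)
  finally have "t * (c * t + k) \<ge> L" .
  hence ctk: "c * t + k > 0"
    using t L by (smt (verit) mult_nonneg_nonpos)
  assume "\<not> x\<^sup>2 * (2 * s - c) \<le> L"
  hence "sqrt (x\<^sup>2 * D) > sqrt L"
    by (simp add: D_def)
  hence "x > t"
    using x D sD by (simp add: real_sqrt_mult t_def pos_divide_less_eq)
  moreover have "c * (x + t) + k > 0"
    using c x ctk by (simp add: distrib_left add_pos_pos add.assoc)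
  ultimately have "(x - t) * (c * (x + t) + k) > 0"
    by simp
  hence "x * (c * x + k) > t * (c * t + k)"
    by (simp add: algebra_simps power2_eq_square)
  thus False
    using \<open>t * (c * t + k) \<ge> L\<close> quad by simp
qed

lemma quadratic_le_imp_sq_le:
  fixes c L k x :: real
  assumes c: "c > 0" and x: "x \<ge> 0" and quad: "c * x\<^sup>2 + k * x \<le> L"
  shows "x\<^sup>2 \<le> 2 * (L / c + (neg_part k)\<^sup>2 / c\<^sup>2)"
proof -
  have "- k * x \<le> neg_part k * x"
    using x by (intro mult_right_mono) (auto simp: neg_part_def)
  also have "neg_part k * x \<le> (neg_part k)\<^sup>2 / (2 * c) + c * x\<^sup>2 / 2"
  proof -
    have "0 \<le> (neg_part k - c * x)\<^sup>2 / (2 * c)"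
      using c by simp
    thus ?thesis
      using c by (simp add: field_simps power2_eq_square)
  qed
  finally have "c * x\<^sup>2 / 2 \<le> L + (neg_part k)\<^sup>2 / (2 * c)"
    using quad by simp
  hence "x\<^sup>2 \<le> 2 * (L / c) + (neg_part k)\<^sup>2 / c\<^sup>2"
    using c by (simp add: field_simps power2_eq_square)
  thus ?thesis
    by (smt (verit) zero_le_divide_iff zero_le_power2)
qed

lemma sq_mul_le_imp_mult_mul_le:
  fixes a b D L :: real
  assumes "a \<ge> 0" "b \<ge> 0" "L \<ge> 0" "a\<^sup>2 * D \<le> L" "b\<^sup>2 * D \<le> L"
  shows "a * b * D \<le> L"
proof (cases "D \<le> 0")
  case True
  thus ?thesis
    using assms by (smt (verit) mult_nonneg_nonpos zero_le_mult_iff)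
next
  case False
  have "(a\<^sup>2 * D) * (b\<^sup>2 * D) \<le> L * L"
    using assms False by (intro mult_mono) auto
  hence "(a * b * D)\<^sup>2 \<le> L\<^sup>2"
    by (simp add: power2_eq_square algebra_simps)
  thus ?thesis
    using \<open>L \<ge> 0\<close> by (rule power2_le_imp_le)
qed

lemma positive_solution_quadratic_le:
  assumes z: "positive_solution l s0 sp sm \<kappa> x0 z" and n: "n \<ge> 1" and sp: "sp n \<ge> 0"
  shows "z n * (s0 n * z n + (\<kappa> n + sm n * z (n - 1))) \<le> l n"
proof -
  have "z n > 0" "z (Suc n) > 0"
    using z n by (auto simp: positive_solution_def)
  hence "z n * (sp n * z (Suc n)) \<ge> 0"
    using sp by simp
  moreover have "l n = z n * (sp n * z (Suc n)) + z n * (s0 n * z n + (\<kappa> n + sm n * z (n - 1)))"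
    using z n by (simp add: positive_solution_def algebra_simps)
  ultimately show ?thesis
    by linarith
qed

lemma positive_solution_sq_le:
  assumes z: "positive_solution l s0 sp sm \<kappa> x0 z" and n: "n \<ge> 2"
    and sp: "sp n \<ge> 0" and sm: "sm n \<ge> 0" and s0: "s0 n > 0"
  shows "(z n)\<^sup>2 \<le> 2 * (l n / s0 n + (neg_part (\<kappa> n))\<^sup>2 / (s0 n)\<^sup>2)"
proof -
  have pos: "z n > 0" "z (n - 1) > 0"
    using z n by (auto simp: positive_solution_def)
  have "z n * (s0 n * z n + (\<kappa> n + sm n * z (n - 1))) \<le> l n"
    using positive_solution_quadratic_le[OF z _ sp] n by simp
  moreover have "z n * (sm n * z (n - 1)) \<ge> 0"
    using pos sm by simp
  ultimately have "s0 n * (z n)\<^sup>2 + \<kappa> n * z n \<le> l n"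
    by (simp add: algebra_simps power2_eq_square)
  thus ?thesis
    using quadratic_le_imp_sq_le s0 pos(1) by simp
qed

lemma positive_solutions_diff_sq_le:
  assumes x: "positive_solution l s0 sp sm \<kappa> x0 x" and y: "positive_solution l s0 sp sm \<kappa> x0 y"
    and n: "n \<ge> 2" and "sp n \<ge> 0" "sm n \<ge> 0" "s0 n > 0"
  shows "(x n - y n)\<^sup>2 \<le> 8 * (l n / s0 n + (neg_part (\<kappa> n))\<^sup>2 / (s0 n)\<^sup>2)"
proof -
  have "(x n - y n)\<^sup>2 \<le> 2 * ((x n)\<^sup>2 + (y n)\<^sup>2)"
    using zero_le_power2[of "x n + y n"] by (simp add: power2_eq_square algebra_simps)
  thus ?thesis
    using positive_solution_sq_le[OF x n] positive_solution_sq_le[OF y n] assms(4-6) by simp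
qed

text \<open>For n \<ge> 2 the term sm n * z (n - 1) of the equation is nonnegative, so the condition on
  \<kappa> n suffices; for n = 1 it is sm 1 * x0, which may be negative, whence the separate condition
  on x0.\<close>
lemma positive_solution_sq_mul_le:
  fixes \<sigma> :: "nat \<Rightarrow> real"
  assumes z: "positive_solution l s0 sp sm \<kappa> x0 z" and n: "n \<ge> 1"
    and l: "l n > 0" and s0: "s0 n > 0" and sp: "sp n \<ge> 0" and sm: "sm n \<ge> 0"
    and union: "Na \<union> Nb = {1..}"
    and cond_a: "\<forall>n\<in>Na. 2 * \<sigma> n \<le> s0 n"
    and cond_b: "\<forall>n\<in>Nb. s0 n < 2 * \<sigma> n \<and>
                   - 2 * (s0 n - \<sigma> n) * sqrt (l n) \<le> \<kappa> n * sqrt (2 * \<sigma> n - s0 n)"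
    and x0_cond: "1 \<in> Nb \<Longrightarrow>
                   - 2 * (s0 1 - \<sigma> 1) * sqrt (l 1) \<le> (sm 1 * x0 + \<kappa> 1) * sqrt (2 * \<sigma> 1 - s0 1)"
  shows "(z n)\<^sup>2 * (2 * \<sigma> n - s0 n) \<le> l n"
proof (cases "n \<in> Na")
  case True
  thus ?thesis
    using cond_a l by (smt (verit) mult_nonneg_nonpos zero_le_power2)
next
  case False
  hence Nb: "n \<in> Nb" and D: "s0 n < 2 * \<sigma> n"
    using union n cond_b by auto
  have "- 2 * (s0 n - \<sigma> n) * sqrt (l n) \<le> (\<kappa> n + sm n * z (n - 1)) * sqrt (2 * \<sigma> n - s0 n)"
  proof (cases "n = 1")
    case True
    thus ?thesis
      using x0_cond Nb z by (simp add: positive_solution_def add.commute)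
  next
    case False
    have "z (n - 1) > 0"
      using z n False by (simp add: positive_solution_def)
    hence "\<kappa> n * sqrt (2 * \<sigma> n - s0 n) \<le> (\<kappa> n + sm n * z (n - 1)) * sqrt (2 * \<sigma> n - s0 n)"
      using sm D by (intro mult_right_mono) auto
    moreover have "- 2 * (s0 n - \<sigma> n) * sqrt (l n) \<le> \<kappa> n * sqrt (2 * \<sigma> n - s0 n)"
      using cond_b Nb by blast
    ultimately show ?thesis
      by linarith
  qed
  thus ?thesis
    using quadratic_le_imp_sq_mul_le[OF s0 D l] positive_solution_quadratic_le[OF z n sp] z n
    by (simp add: positive_solution_def)
qed

lemma positive_solutions_diff_recurrence:
  assumes x: "positive_solution l s0 sp sm \<kappa> x0 x" and y: "positive_solution l s0 sp sm \<kappa> x0 y"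
    and n: "n \<ge> 1"
  shows "sp n * (x (Suc n) - y (Suc n)) + (s0 n + l n / (x n * y n)) * (x n - y n)
           + sm n * (x (n - 1) - y (n - 1)) = 0"
proof -
  have pos: "x n > 0" "y n > 0"
    using x y n by (auto simp: positive_solution_def)
  have "l n / x n = sp n * x (Suc n) + s0 n * x n + sm n * x (n - 1) + \<kappa> n"
       "l n / y n = sp n * y (Suc n) + s0 n * y n + sm n * y (n - 1) + \<kappa> n"
    using x y n pos by (auto simp: positive_solution_def field_simps)
  moreover have "l n / x n - l n / y n = - (l n / (x n * y n)) * (x n - y n)"
    using pos by (simp add: field_simps)
  ultimately show ?thesis
    by (simp add: algebra_simps)
qed

lemma alternating_recurrence_linear_growth:
  fixes a b c s u :: "nat \<Rightarrow> real"
  assumes u0: "u 0 = 0" and u1: "u 1 > 0"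
    and coeffs: "\<And>n. n \<ge> 1 \<Longrightarrow> 0 \<le> b n \<and> b n \<le> s n \<and> 0 \<le> c n \<and> c n \<le> s n \<and> 2 * s n \<le> a n \<and> 0 < a n"
    and rec: "\<And>n. n \<ge> 1 \<Longrightarrow> b n * u (Suc n) = a n * u n - c n * u (n - 1)"
  shows "real k * u 1 \<le> u k"
proof -
  have "0 \<le> u k \<and> u 1 \<le> u (Suc k) - u k \<and> real (Suc k) * u 1 \<le> u (Suc k)" for k
  proof (induction k)
    case 0
    thus ?case using u0 by simp
  next
    case (Suc k)
    define n where "n = Suc k"
    have IH: "0 \<le> u k" "u 1 \<le> u n - u k" "real n * u 1 \<le> u n"
      using Suc.IH by (simp_all add: n_def)
    have cf: "0 \<le> b n" "b n \<le> s n" "0 \<le> c n" "c n \<le> s n" "2 * s n \<le> a n" "0 < a n"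
      using coeffs[of n] by (simp_all add: n_def)
    have rec_n: "b n * u (Suc n) = a n * u n - c n * u k"
      using rec[of n] by (simp add: n_def)
    have "c n * u k \<le> s n * u n"
      using cf IH u1 by (intro mult_mono) auto
    \<comment> \<open>\<open>a\<^sub>n - s\<^sub>n \<ge> a\<^sub>n / 2 > 0\<close>, so the right-hand side is positive, which forces \<open>b\<^sub>n > 0\<close>\<close>
    moreover have "0 < (a n - s n) * u n"
      using cf IH u1 by (intro mult_pos_pos) linarith+
    ultimately have pos: "0 < b n * u (Suc n)"
      using rec_n by (simp add: algebra_simps)
    hence "0 < b n" "0 < u (Suc n)"
      using cf by (auto simp: zero_less_mult_iff)
    have "c n * u k \<le> s n * u k" "2 * s n * u n \<le> a n * u n" "s n * u 1 \<le> s n * (u n - u k)"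
      using cf IH u1 by (auto intro!: mult_right_mono mult_left_mono)
    hence "s n * (u n + u 1) \<le> b n * u (Suc n)"
      using rec_n by (simp add: algebra_simps)
    also have "\<dots> \<le> s n * u (Suc n)"
      using cf \<open>0 < u (Suc n)\<close> by (intro mult_right_mono) auto
    finally have "u n + u 1 \<le> u (Suc n)"
      using \<open>0 < b n\<close> cf by (simp add: mult_le_cancel_left)
    thus ?case
      using IH u1 by (simp add: n_def algebra_simps)
  qed
  thus ?thesis
    using u0 by (cases k) auto
qed

lemma three_term_recurrence_linear_growth:
  fixes a b c s d :: "nat \<Rightarrow> real"
  assumes d0: "d 0 = 0"
    and coeffs: "\<And>n. n \<ge> 1 \<Longrightarrow> 0 \<le> b n \<and> b n \<le> s n \<and> 0 \<le> c n \<and> c n \<le> s n \<and> 2 * s n \<le> a n \<and> 0 < a n"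
    and rec: "\<And>n. n \<ge> 1 \<Longrightarrow> b n * d (Suc n) + a n * d n + c n * d (n - 1) = 0"
  shows "real k * \<bar>d 1\<bar> \<le> \<bar>d k\<bar>"
proof (cases "d 1 = 0")
  case True
  thus ?thesis by simp
next
  case False
  \<comment> \<open>undo the alternation of signs\<close>
  define u where "u n = (-1) ^ Suc n * sgn (d 1) * d n" for n
  have rec_u: "b n * u (Suc n) = a n * u n - c n * u (n - 1)" if n: "n \<ge> 1" for n
  proof -
    obtain j where j: "n = Suc j"
      using n by (cases n) auto
    define g where "g = (-1) ^ j * sgn (d 1)"
    have "u (Suc n) = - g * d (Suc n)" "u n = g * d n" "u (n - 1) = - g * d (n - 1)"
      by (simp_all add: u_def g_def j)
    moreover have "b n * d (Suc n) + a n * d n + c n * d (n - 1) = 0"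
      using rec n .
    ultimately show ?thesis
      by algebra
  qed
  have u0: "u 0 = 0" and u1: "u 1 = \<bar>d 1\<bar>"
    using d0 by (simp_all add: u_def sgn_if)
  have "0 < u 1"
    using u1 False by simp
  hence "real k * u 1 \<le> u k"
    using alternating_recurrence_linear_growth[of u b s c a, OF u0 _ coeffs rec_u] by simp
  moreover have "\<bar>u k\<bar> = \<bar>d k\<bar>"
    using False by (simp add: u_def abs_mult)
  ultimately show ?thesis
    using u1 abs_ge_self[of "u k"] by simp
qed

lemma positive_solutions_diff_quadratic_growth:
  fixes \<sigma> :: "nat \<Rightarrow> real"
  assumes x: "positive_solution l s0 sp sm \<kappa> x0 x" and y: "positive_solution l s0 sp sm \<kappa> x0 y"
    and coeffs: "\<And>n. n \<ge> 1 \<Longrightarrow>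
                   0 < l n \<and> 0 < s0 n \<and> 0 \<le> sp n \<and> sp n \<le> \<sigma> n \<and> 0 \<le> sm n \<and> sm n \<le> \<sigma> n"
    and bound_x: "\<And>n. n \<ge> 1 \<Longrightarrow> (x n)\<^sup>2 * (2 * \<sigma> n - s0 n) \<le> l n"
    and bound_y: "\<And>n. n \<ge> 1 \<Longrightarrow> (y n)\<^sup>2 * (2 * \<sigma> n - s0 n) \<le> l n"
    and "x \<noteq> y"
  shows "\<exists>e>0. \<forall>\<^sub>F n in sequentially. e * (real n)\<^sup>2 \<le> (x n - y n)\<^sup>2"
proof -
  define d where "d n = x n - y n" for n
  define A where "A n = s0 n + l n / (x n * y n)" for n
  have A: "2 * \<sigma> n \<le> A n \<and> 0 < A n" if n: "n \<ge> 1" for n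
  proof -
    have pos: "x n > 0" "y n > 0"
      using x y n by (auto simp: positive_solution_def)
    have "x n * y n * (2 * \<sigma> n - s0 n) \<le> l n"
      using sq_mul_le_imp_mult_mul_le bound_x bound_y pos coeffs n by (simp add: less_imp_le)
    hence "2 * \<sigma> n - s0 n \<le> l n / (x n * y n)"
      using pos by (simp add: pos_le_divide_eq mult.commute)
    moreover have "0 < l n / (x n * y n)"
      using pos coeffs[OF n] by simp
    ultimately show ?thesis
      using coeffs[OF n] by (simp add: A_def)
  qed
  obtain m where dm: "d m \<noteq> 0" and d_before: "\<And>i. i < m \<Longrightarrow> d i = 0"
    using \<open>x \<noteq> y\<close> exists_least_iff[of "\<lambda>n. d n \<noteq> 0"] by (auto simp: d_def fun_eq_iff)
  obtain p where m: "m = Suc p"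
    using dm x y by (cases m) (auto simp: d_def positive_solution_def)
  \<comment> \<open>restart the difference at \<open>p = m - 1\<close>, where it vanishes\<close>
  have rec: "sp (p + k) * d (p + Suc k) + A (p + k) * d (p + k) + sm (p + k) * d (p + (k - 1)) = 0"
    if "k \<ge> 1" for k
    using positive_solutions_diff_recurrence[OF x y, of "p + k", folded d_def A_def] that
    by (simp add: Nat.add_diff_assoc)
  have growth: "real k * \<bar>d m\<bar> \<le> \<bar>d (p + k)\<bar>" for k
    using three_term_recurrence_linear_growth[where d = "\<lambda>k. d (p + k)" and k = k and
        b = "\<lambda>k. sp (p + k)" and a = "\<lambda>k. A (p + k)" and c = "\<lambda>k. sm (p + k)" and
        s = "\<lambda>k. \<sigma> (p + k)", OF _ _ rec] d_before[of p] coeffs A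
    by (simp add: m)
  define e where "e = (d m)\<^sup>2 / 4"
  have "e * (real n)\<^sup>2 \<le> (x n - y n)\<^sup>2" if n: "n \<ge> 2 * m" for n
  proof -
    have "real n / 2 * \<bar>d m\<bar> \<le> real (n - p) * \<bar>d m\<bar>"
      using n by (intro mult_right_mono) (auto simp: m of_nat_diff)
    also have "\<dots> \<le> \<bar>d n\<bar>"
      using growth[of "n - p"] n by (simp add: m)
    finally have "(real n / 2 * \<bar>d m\<bar>)\<^sup>2 \<le> (d n)\<^sup>2"
      by (metis abs_ge_zero power2_abs power_mono zero_le_divide_iff zero_le_mult_iff of_nat_0_le_iff
          zero_le_numeral)
    thus ?thesis
      by (simp add: e_def d_def power_mult_distrib power_divide mult.commute)
  qed
  moreover have "e > 0"
    using dm by (simp add: e_def)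
  ultimately show ?thesis
    by (auto simp: eventually_sequentially)
qed

lemma liminf_eq_0_imp_not_eventually_ge:
  fixes f :: "nat \<Rightarrow> real"
  assumes "liminf (\<lambda>n. ereal (f n)) = 0" and "c > 0"
  shows "\<not> (\<forall>\<^sub>F n in sequentially. c \<le> f n)"
proof
  assume "\<forall>\<^sub>F n in sequentially. c \<le> f n"
  hence "ereal c \<le> liminf (\<lambda>n. ereal (f n))"
    by (intro Liminf_bounded) (auto elim: eventually_mono)
  thus False
    using assms by simp
qed

theorem theorem5p2:
  fixes l s0 \<kappa> sp sm :: "nat \<Rightarrow> real" and Na Nb :: "nat set" and x0 :: real
  defines "\<sigma> \<equiv> (\<lambda>n. max (sm n) (sp n))"
  assumes l_pos: "\<forall>n\<ge>1. l n > 0"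
    and s0_pos: "\<forall>n\<ge>1. s0 n > 0"
    and sp_nonneg: "\<forall>n\<ge>1. sp n \<ge> 0"
    and sm_nonneg: "\<forall>n\<ge>1. sm n \<ge> 0"
    and liminf0: "liminf (\<lambda>n. ereal ((1 / (real n)^2) *
                    (l n / s0 n + (neg_part (\<kappa> n))^2 / (s0 n)^2))) = 0"
    and union: "Na \<union> Nb = {1..}"
    and disj: "Na \<inter> Nb = {}"
    and cond_a: "\<forall>n\<in>Na. 2 * \<sigma> n \<le> s0 n"
    and cond_b: "\<forall>n\<in>Nb. \<sigma> n \<le> s0 n \<and> s0 n < 2 * \<sigma> n \<and>
                   - 2 * (s0 n - \<sigma> n) * sqrt (l n) \<le> \<kappa> n * sqrt (2 * \<sigma> n - s0 n)"
    and x0_cond: "1 \<in> Nb \<Longrightarrow>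
                   - 2 * (s0 1 - \<sigma> 1) * sqrt (l 1) \<le> (sm 1 * x0 + \<kappa> 1) * sqrt (2 * \<sigma> 1 - s0 1)"
  shows "\<forall>x y. positive_solution l s0 sp sm \<kappa> x0 x \<and> positive_solution l s0 sp sm \<kappa> x0 y
                 \<longrightarrow> (\<forall>n. x n = y n)"
proof (intro allI impI; elim conjE)
  fix x y n
  assume x: "positive_solution l s0 sp sm \<kappa> x0 x" and y: "positive_solution l s0 sp sm \<kappa> x0 y"
  have bound: "(z k)\<^sup>2 * (2 * \<sigma> k - s0 k) \<le> l k"
    if "positive_solution l s0 sp sm \<kappa> x0 z" "k \<ge> 1" for z k
    using positive_solution_sq_mul_le[OF that _ _ _ _ union cond_a _ x0_cond] cond_b
      l_pos s0_pos sp_nonneg sm_nonneg that(2) by blast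
  show "x n = y n"
  proof (rule ccontr)
    assume "x n \<noteq> y n"
    then obtain e where e: "e > 0" and growth: "\<forall>\<^sub>F k in sequentially. e * (real k)\<^sup>2 \<le> (x k - y k)\<^sup>2"
      using positive_solutions_diff_quadratic_growth[OF x y _ bound[OF x] bound[OF y]]
        l_pos s0_pos sp_nonneg sm_nonneg by (auto simp: \<sigma>_def fun_eq_iff)
    have "\<forall>\<^sub>F k in sequentially.
            e / 8 \<le> 1 / (real k)\<^sup>2 * (l k / s0 k + (neg_part (\<kappa> k))\<^sup>2 / (s0 k)\<^sup>2)"
      using growth eventually_ge_at_top[of 2]
    proof eventually_elim
      case (elim k)
      thus ?case
        using positive_solutions_diff_sq_le[OF x y, of k] sp_nonneg sm_nonneg s0_pos
        by (simp add: field_simps)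
    qed
    moreover have "e / 8 > 0"
      using e by simp
    ultimately show False
      using liminf_eq_0_imp_not_eventually_ge[OF liminf0] by blast
  qed
qed

end
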